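(* Let $w,v\in\Sigma^*$ and $k\in\mathbb{N}$ with $w\equiv_k v$. Consider a play of the $k$-round Ehrenfeucht–Fraïssé game on $\mathfrak{A}_w$ and $\mathfrak{A}_v$ in which Duplicator follows a winning strategy, and let $a_r$ and $b_r$ be the elements of $\mathfrak{A}_w$ and $\mathfrak{A}_v$, respectively, chosen in round $r$. If for some $r\in\{1,\dots,k\}$ either $a_r\in\mathsf{Facs}(w)$ and $r+|a_r|-1<k$, or $b_r\in\mathsf{Facs}(v)$ and $r+|b_r|-1<k$, then $a_r=b_r$.
   Context: $\Sigma$ is a fixed finite alphabet. For $w \in \Sigma^*$, $\mathsf{Facs}(w)$ is the set of all factors (contiguous subwords, including $\varepsilon$ and $w$) of $w$; $|u|$ is the length of $u$. The structure $\mathfrak{A}_w$ representing $w$ has universe $\mathsf{Facs}(w)\cup\{\perp\}$, a ternary relation $R_\circ=\{(x,y,z)\in\mathsf{Facs}(w)^3 : x=y\cdot z\}$, for each letter $\mathtt{a}\in\Sigma$ a constant interpreted as $\mathtt{a}$ if $\mathtt{a}$ occurs in $w$ and as $\perp$ otherwise, and a constant $\varepsilon$ interpreted as the empty word. The $k$-round Ehrenfeucht–Fraïssé game on $\mathfrak{A}_w,\mathfrak{A}_v$: in each round $i$, Spoiler picks one of the two structures and an element of its universe, Duplicator answers with an element of the other structure's universe; let $a_i$ (in $\mathfrak{A}_w$) and $b_i$ (in $\mathfrak{A}_v$) be the chosen elements. Duplicator wins if the tuples $(a_1,\dots,a_k,\vec c^{\,\mathfrak{A}_w})$ and $(b_1,\dots,b_k,\vec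 c^{\,\mathfrak{A}_v})$, where $\vec c$ lists the interpretations of all constants, form a partial isomorphism: for all indices $i,j,l$, $a_i$ equals the interpretation of a constant $c$ iff $b_i$ equals the interpretation of $c$; $a_i=a_j$ iff $b_i=b_j$; and $a_i=a_j\cdot a_l$ iff $b_i=b_j\cdot b_l$. We write $w\equiv_k v$ if Duplicator has a winning strategy in the $k$-round game, i.e. a strategy guaranteeing a win against every play of Spoiler. *)

theory Defs
  imports Main "HOL-Library.Sublist"
begin

text \<open>Words over the alphabet 'a are lists. Elements of the structure A_w are
  of type 'a list option: Some u stands for the factor u, None for bottom.\<close>

definition Facs :: "'a list \<Rightarrow> 'a list set" where
  "Facs w = {u. sublist u w}"

definition univ :: "'a list \<Rightarrow> 'a list option set" where
  "univ w = Some ` Facs w \<union> {None}"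

text \<open>Constant symbols: Some c is the letter constant c, None is the constant epsilon.\<close>

definition const_interp :: "'a list \<Rightarrow> 'a option \<Rightarrow> 'a list option" where
  "const_interp w c = (case c of
      None \<Rightarrow> Some []
    | Some x \<Rightarrow> (if x \<in> set w then Some [x] else None))"

definition Rcat :: "'a list \<Rightarrow> 'a list option \<Rightarrow> 'a list option \<Rightarrow> 'a list option \<Rightarrow> bool" where
  "Rcat w x y z = (\<exists>x' y' z'. x = Some x' \<and> y = Some y' \<and> z = Some z'
       \<and> x' \<in> Facs w \<and> y' \<in> Facs w \<and> z' \<in> Facs w \<and> x' = y' @ z')"

definition ext_tuple :: "'a list \<Rightarrow> 'a list option list \<Rightarrow> nat + 'a option \<Rightarrow> 'a list option" where
  "ext_tuple w as x = (case x of Inl i \<Rightarrow> as ! i | Inr c \<Rightarrow> const_interp w c)"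

definition idx :: "nat \<Rightarrow> (nat + 'a option) set" where
  "idx n = Inl ` {..<n} \<union> range Inr"

definition partial_iso ::
  "'a list \<Rightarrow> 'a list \<Rightarrow> 'a list option list \<Rightarrow> 'a list option list \<Rightarrow> bool" where
  "partial_iso w v as bs =
     (length as = length bs \<and>
      (\<forall>x\<in>idx (length as). \<forall>c. ext_tuple w as x = const_interp w c
                                    \<longleftrightarrow> ext_tuple v bs x = const_interp v c) \<and>
      (\<forall>x\<in>idx (length as). \<forall>y\<in>idx (length as).
          ext_tuple w as x = ext_tuple w as y \<longleftrightarrow> ext_tuple v bs x = ext_tuple v bs y) \<and>
      (\<forall>x\<in>idx (length as). \<forall>y\<in>idx (length as). \<forall>z\<in>idx (length as).
          Rcat w (ext_tuple w as x) (ext_tuple w as y) (ext_tuple w as z)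
          \<longleftrightarrow> Rcat v (ext_tuple v bs x) (ext_tuple v bs y) (ext_tuple v bs z)))"

text \<open>A Spoiler move is a pair (side, element): side = True means Spoiler picks in A_w,
  side = False means Spoiler picks in A_v. A Duplicator strategy maps the sequence of
  Spoiler moves so far (including the current one) to Duplicator's answer.\<close>

type_synonym 'a move = "bool \<times> 'a list option"
type_synonym 'a strategy = "'a move list \<Rightarrow> 'a list option"

definition valid_moves :: "'a list \<Rightarrow> 'a list \<Rightarrow> 'a move list \<Rightarrow> bool" where
  "valid_moves w v ms = (\<forall>m\<in>set ms. snd m \<in> (if fst m then univ w else univ v))"

text \<open>Elements chosen in round i+1 (0-based index i).\<close>

definition play_a :: "'a strategy \<Rightarrow> 'a move list \<Rightarrow> nat \<Rightarrow> 'a list option" where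
  "play_a \<sigma> ms i = (if fst (ms ! i) then snd (ms ! i) else \<sigma> (take (Suc i) ms))"

definition play_b :: "'a strategy \<Rightarrow> 'a move list \<Rightarrow> nat \<Rightarrow> 'a list option" where
  "play_b \<sigma> ms i = (if fst (ms ! i) then \<sigma> (take (Suc i) ms) else snd (ms ! i))"

definition winning_strategy :: "'a list \<Rightarrow> 'a list \<Rightarrow> nat \<Rightarrow> 'a strategy \<Rightarrow> bool" where
  "winning_strategy w v k \<sigma> =
     (\<forall>ms. length ms = k \<and> valid_moves w v ms \<longrightarrow>
        (\<forall>i<k. play_a \<sigma> ms i \<in> univ w \<and> play_b \<sigma> ms i \<in> univ v) \<and>
        partial_iso w v (map (play_a \<sigma> ms) [0..<k]) (map (play_b \<sigma> ms) [0..<k]))"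

definition ef_equiv :: "'a list \<Rightarrow> nat \<Rightarrow> 'a list \<Rightarrow> bool" where
  "ef_equiv w k v = (\<exists>\<sigma>. winning_strategy w v k \<sigma>)"

end

theory Submission
  imports Defs
begin

text \<open>Induction on the length of a factor u chosen in round i, over all plays at once.
  If u = y x with a letter x, Spoiler could instead have chosen y in round i + 1; this
  deviation does not change the first i + 1 rounds, since Duplicator's answers depend only on
  the moves made so far. By induction Duplicator answers y in round i + 1, and the relation
  u = y \<cdot> x with the letter constant x then forces her answer in round i to be y x too.
  For a factor chosen in A_v exchange the roles of the two structures.\<close>

lemma Facs_snocD:
  assumes "y @ [x] \<in> Facs w"
  shows "y \<in> Facs w" "[x] \<in> Facs w"
proof -
  have "sublist y (y @ [x])" "sublist [x] (y @ [x])" by auto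
  then show "y \<in> Facs w" "[x] \<in> Facs w"
    using assms unfolding Facs_def by (auto intro: sublist_order.order.trans)
qed

lemma Rcat_letter_iff:
  "Rcat w a (Some y) (const_interp w (Some x)) \<longleftrightarrow> a = Some (y @ [x]) \<and> y @ [x] \<in> Facs w"
proof
  assume "a = Some (y @ [x]) \<and> y @ [x] \<in> Facs w"
  moreover from this have "x \<in> set w"
    unfolding Facs_def by (auto dest: set_mono_sublist)
  ultimately show "Rcat w a (Some y) (const_interp w (Some x))"
    using Facs_snocD[of y x w] by (simp add: Rcat_def const_interp_def)
qed (auto simp: Rcat_def const_interp_def split: if_splits)

lemma partial_iso_sym:
  assumes "partial_iso w v as bs"
  shows "partial_iso v w bs as"
proof -
  have "length bs = length as" using assms by (simp add: partial_iso_def)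
  \<comment> \<open>eq_commute is permutative: simp orients every iff on both sides the same way\<close>
  then show ?thesis using assms unfolding partial_iso_def by (simp add: eq_commute)
qed

lemma winning_strategy_partial_iso:
  assumes "winning_strategy w v k \<sigma>" "length ms = k" "valid_moves w v ms"
  shows "partial_iso w v (map (play_a \<sigma> ms) [0..<k]) (map (play_b \<sigma> ms) [0..<k])"
  using assms unfolding winning_strategy_def by blast

lemma winning_strategy_const_iff:
  assumes "winning_strategy w v k \<sigma>" "length ms = k" "valid_moves w v ms" "i < k"
  shows "play_a \<sigma> ms i = const_interp w c \<longleftrightarrow> play_b \<sigma> ms i = const_interp v c"
proof -
  let ?as = "map (play_a \<sigma> ms) [0..<k]" and ?bs = "map (play_b \<sigma> ms) [0..<k]"
  have "Inl i \<in> idx (length ?as)" using \<open>i < k\<close> by (simp add: idx_def)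
  then have "ext_tuple w ?as (Inl i) = const_interp w c
      \<longleftrightarrow> ext_tuple v ?bs (Inl i) = const_interp v c"
    using winning_strategy_partial_iso[OF assms(1-3)] unfolding partial_iso_def by blast
  then show ?thesis using \<open>i < k\<close> by (simp add: ext_tuple_def)
qed

lemma winning_strategy_Rcat_const_iff:
  assumes "winning_strategy w v k \<sigma>" "length ms = k" "valid_moves w v ms" "i < k" "j < k"
  shows "Rcat w (play_a \<sigma> ms i) (play_a \<sigma> ms j) (const_interp w c)
     \<longleftrightarrow> Rcat v (play_b \<sigma> ms i) (play_b \<sigma> ms j) (const_interp v c)"
proof -
  let ?as = "map (play_a \<sigma> ms) [0..<k]" and ?bs = "map (play_b \<sigma> ms) [0..<k]"
  have "Inl i \<in> idx (length ?as)" "Inl j \<in> idx (length ?as)" "Inr c \<in> idx (length ?as)"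
    using \<open>i < k\<close> \<open>j < k\<close> by (auto simp: idx_def)
  then have "Rcat w (ext_tuple w ?as (Inl i)) (ext_tuple w ?as (Inl j)) (ext_tuple w ?as (Inr c))
      \<longleftrightarrow> Rcat v (ext_tuple v ?bs (Inl i)) (ext_tuple v ?bs (Inl j)) (ext_tuple v ?bs (Inr c))"
    using winning_strategy_partial_iso[OF assms(1-3)] unfolding partial_iso_def by blast
  then show ?thesis using \<open>i < k\<close> \<open>j < k\<close> by (simp add: ext_tuple_def)
qed

lemma play_list_update_later:
  assumes "i < j"
  shows "play_a \<sigma> (ms[j := m]) i = play_a \<sigma> ms i" "play_b \<sigma> (ms[j := m]) i = play_b \<sigma> ms i"
  using assms by (simp_all add: play_a_def play_b_def)

lemma valid_moves_list_update:
  assumes "valid_moves w v ms" "snd m \<in> (if fst m then univ w else univ v)"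
  shows "valid_moves w v (ms[j := m])"
  using assms set_update_subset_insert unfolding valid_moves_def by fastforce

lemma winning_strategy_copies_factor:
  assumes "winning_strategy w v k \<sigma>"
  shows "\<lbrakk>length ms = k; valid_moves w v ms; play_a \<sigma> ms i = Some u; u \<in> Facs w;
     i + length u < k\<rbrakk> \<Longrightarrow> play_b \<sigma> ms i = Some u"
proof (induction u arbitrary: ms i rule: rev_induct)
  case Nil
  then show ?case
    using winning_strategy_const_iff[OF assms, of ms i None] by (simp add: const_interp_def)
next
  case (snoc x y)
  define ms' where "ms' = ms[Suc i := (True, Some y)]"
  have "Suc i < k" using snoc.prems by simp
  have ms': "length ms' = k" "valid_moves w v ms'"
    using snoc.prems Facs_snocD(1)[of y x w] unfolding ms'_def
    by (auto intro: valid_moves_list_update simp: univ_def)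
  have "play_a \<sigma> ms' (Suc i) = Some y"
    using \<open>Suc i < k\<close> snoc.prems(1) by (simp add: ms'_def play_a_def)
  moreover have "play_b \<sigma> ms' (Suc i) = Some y"
    using snoc.IH[OF ms'] \<open>play_a \<sigma> ms' (Suc i) = Some y\<close> Facs_snocD(1)[of y x w] snoc.prems(4,5)
    by simp
  moreover have "play_a \<sigma> ms' i = Some (y @ [x])" "play_b \<sigma> ms' i = play_b \<sigma> ms i"
    using snoc.prems(3) by (simp_all add: ms'_def play_list_update_later)
  ultimately show ?case
    using winning_strategy_Rcat_const_iff[OF assms ms', of i "Suc i" "Some x"]
      \<open>Suc i < k\<close> snoc.prems(4) by (simp add: Rcat_letter_iff)
qed

definition swap_moves :: "'a move list \<Rightarrow> 'a move list" where
  "swap_moves = map (apfst Not)"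

definition swap_strategy :: "'a strategy \<Rightarrow> 'a strategy" where
  "swap_strategy \<sigma> = \<sigma> \<circ> swap_moves"

lemma swap_moves_swap_moves [simp]: "swap_moves (swap_moves ms) = ms"
  by (simp add: swap_moves_def comp_def apfst_def map_prod_def case_prod_unfold)

lemma length_swap_moves [simp]: "length (swap_moves ms) = length ms"
  by (simp add: swap_moves_def)

lemma valid_moves_swap_moves [simp]: "valid_moves v w (swap_moves ms) = valid_moves w v ms"
  by (auto simp: valid_moves_def swap_moves_def)

lemma play_swap_strategy:
  assumes "i < length ms"
  shows "play_a (swap_strategy \<sigma>) ms i = play_b \<sigma> (swap_moves ms) i"
    "play_b (swap_strategy \<sigma>) ms i = play_a \<sigma> (swap_moves ms) i"
  using assms
  by (simp_all add: play_a_def play_b_def swap_strategy_def swap_moves_def take_map apfst_def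
      map_prod_def case_prod_unfold)

lemma winning_strategy_swap:
  assumes "winning_strategy w v k \<sigma>"
  shows "winning_strategy v w k (swap_strategy \<sigma>)"
  unfolding winning_strategy_def
proof (intro allI impI)
  fix ms :: "'a move list"
  assume ms: "length ms = k \<and> valid_moves v w ms"
  then have "length (swap_moves ms) = k" "valid_moves w v (swap_moves ms)" by simp_all
  then have univ: "\<forall>i<k. play_a \<sigma> (swap_moves ms) i \<in> univ w \<and> play_b \<sigma> (swap_moves ms) i \<in> univ v"
    and iso: "partial_iso w v (map (play_a \<sigma> (swap_moves ms)) [0..<k])
        (map (play_b \<sigma> (swap_moves ms)) [0..<k])"
    using assms unfolding winning_strategy_def by blast+
  have as: "map (play_a (swap_strategy \<sigma>) ms) [0..<k] = map (play_b \<sigma> (swap_moves ms)) [0..<k]"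
    and bs: "map (play_b (swap_strategy \<sigma>) ms) [0..<k] = map (play_a \<sigma> (swap_moves ms)) [0..<k]"
    using ms by (simp_all add: play_swap_strategy)
  show "(\<forall>i<k. play_a (swap_strategy \<sigma>) ms i \<in> univ v
      \<and> play_b (swap_strategy \<sigma>) ms i \<in> univ w)
    \<and> partial_iso v w (map (play_a (swap_strategy \<sigma>) ms) [0..<k])
        (map (play_b (swap_strategy \<sigma>) ms) [0..<k])"
    unfolding as bs using univ partial_iso_sym[OF iso] ms by (simp add: play_swap_strategy)
qed

theorem lemma4p2:
  fixes w v :: "'a::finite list" and k r :: nat
    and \<sigma> :: "'a strategy" and ms :: "'a move list"
  assumes "ef_equiv w k v"
    and "winning_strategy w v k \<sigma>"
    and "length ms = k" and "valid_moves w v ms"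
    and "1 \<le> r" and "r \<le> k"
    and "(\<exists>u. play_a \<sigma> ms (r - 1) = Some u \<and> u \<in> Facs w \<and> r + length u - 1 < k)
       \<or> (\<exists>u. play_b \<sigma> ms (r - 1) = Some u \<and> u \<in> Facs v \<and> r + length u - 1 < k)"
  shows "play_a \<sigma> ms (r - 1) = play_b \<sigma> ms (r - 1)"
  using assms(7)
proof (elim disjE exE conjE)
  fix u assume "play_a \<sigma> ms (r - 1) = Some u" "u \<in> Facs w" "r + length u - 1 < k"
  then show ?thesis
    using winning_strategy_copies_factor[OF assms(2,3,4)] \<open>1 \<le> r\<close> by simp
next
  fix u assume u: "play_b \<sigma> ms (r - 1) = Some u" "u \<in> Facs v" "r + length u - 1 < k"
  have "r - 1 < length ms" using assms(3,5,6) by simp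
  then show ?thesis
    using winning_strategy_copies_factor[OF winning_strategy_swap[OF assms(2)], of "swap_moves ms"]
      u assms(3,4,5) by (simp add: play_swap_strategy)
qed

end
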